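(* Let $\mathcal{P}=\langle P,\le\rangle$ be a finite bounded poset with $|P|\ge 2$, and let $R^+(\mathcal{P})$ be its interval rank poset. Then the width satisfies $\mathcal{W}(R^+(\mathcal{P}))\le\mathcal{W}(\mathcal{P})$.
   Context: A poset is bounded if it has a least and a greatest element. The height $H$ of a finite poset is the number of elements in its largest chain; the width $\mathcal{W}$ is the size of its largest antichain. For $a\in P$, $\uparrow a=\{b:b\ge a\}$ and $\downarrow a=\{b:b\le a\}$ as subposets. The standard interval rank is $R^+(a)=[H(\uparrow a)-1,\;H(\mathcal{P})-H(\downarrow a)]$. The interval rank poset $R^+(\mathcal{P})$ is the set $\{R^+(a):a\in P\}$ of intervals ordered by $\ge_W$, where $[x_*,x^*]\le_W[y_*,y^*]$ iff $x_*\le y_*$ and $x^*\le y^*$. *)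

theory Defs
  imports Main
begin

definition is_poset :: "'a set \<Rightarrow> ('a \<Rightarrow> 'a \<Rightarrow> bool) \<Rightarrow> bool" where
  "is_poset P le \<longleftrightarrow>
     (\<forall>x\<in>P. le x x) \<and>
     (\<forall>x\<in>P. \<forall>y\<in>P. le x y \<and> le y x \<longrightarrow> x = y) \<and>
     (\<forall>x\<in>P. \<forall>y\<in>P. \<forall>z\<in>P. le x y \<and> le y z \<longrightarrow> le x z)"

definition bounded_poset :: "'a set \<Rightarrow> ('a \<Rightarrow> 'a \<Rightarrow> bool) \<Rightarrow> bool" where
  "bounded_poset P le \<longleftrightarrow>
     (\<exists>b\<in>P. \<forall>x\<in>P. le b x) \<and> (\<exists>t\<in>P. \<forall>x\<in>P. le x t)"

definition is_chain :: "'a set \<Rightarrow> ('a \<Rightarrow> 'a \<Rightarrow> bool) \<Rightarrow> 'a set \<Rightarrow> bool" where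
  "is_chain P le C \<longleftrightarrow> C \<subseteq> P \<and> (\<forall>x\<in>C. \<forall>y\<in>C. le x y \<or> le y x)"

definition is_antichain :: "'a set \<Rightarrow> ('a \<Rightarrow> 'a \<Rightarrow> bool) \<Rightarrow> 'a set \<Rightarrow> bool" where
  "is_antichain P le A \<longleftrightarrow> A \<subseteq> P \<and> (\<forall>x\<in>A. \<forall>y\<in>A. le x y \<longrightarrow> x = y)"

text \<open>Height: number of elements of a largest chain; width: size of a largest antichain
  (meant for finite carriers).\<close>

definition height :: "'a set \<Rightarrow> ('a \<Rightarrow> 'a \<Rightarrow> bool) \<Rightarrow> nat" where
  "height P le = Max (card ` {C. is_chain P le C})"

definition width :: "'a set \<Rightarrow> ('a \<Rightarrow> 'a \<Rightarrow> bool) \<Rightarrow> nat" where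
  "width P le = Max (card ` {A. is_antichain P le A})"

definition up_set :: "'a set \<Rightarrow> ('a \<Rightarrow> 'a \<Rightarrow> bool) \<Rightarrow> 'a \<Rightarrow> 'a set" where
  "up_set P le a = {b\<in>P. le a b}"

definition down_set :: "'a set \<Rightarrow> ('a \<Rightarrow> 'a \<Rightarrow> bool) \<Rightarrow> 'a \<Rightarrow> 'a set" where
  "down_set P le a = {b\<in>P. le b a}"

text \<open>Standard interval rank R+(a) = [H(up a) - 1, H(P) - H(down a)], as a pair of endpoints.
  The subtractions never truncate: H(up a) \<ge> 1 and H(down a) \<le> H(P).\<close>

definition interval_rank :: "'a set \<Rightarrow> ('a \<Rightarrow> 'a \<Rightarrow> bool) \<Rightarrow> 'a \<Rightarrow> nat \<times> nat" where
  "interval_rank P le a =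
     (height (up_set P le a) le - 1, height P le - height (down_set P le a) le)"

definition interval_le :: "nat \<times> nat \<Rightarrow> nat \<times> nat \<Rightarrow> bool" where
  "interval_le x y \<longleftrightarrow> fst x \<le> fst y \<and> snd x \<le> snd y"

definition interval_rank_set :: "'a set \<Rightarrow> ('a \<Rightarrow> 'a \<Rightarrow> bool) \<Rightarrow> (nat \<times> nat) set" where
  "interval_rank_set P le = interval_rank P le ` P"

end

theory Submission
  imports Defs
begin

text \<open>If \<open>a < b\<close> then a longest chain above \<open>b\<close> extends by \<open>a\<close>, so \<open>H(\<up>b) < H(\<up>a)\<close>, while every
  chain below \<open>a\<close> lies below \<open>b\<close>, so \<open>H(\<down>a) \<le> H(\<down>b)\<close>. Hence \<open>R\<^sup>+\<close> is strictly order-reversing,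
  and choosing one preimage of each interval turns an antichain of \<open>R\<^sup>+(P)\<close> into an antichain of
  \<open>P\<close> of the same size.\<close>

lemma finite_chains: "finite S \<Longrightarrow> finite {C. is_chain S le C}"
  by (rule finite_subset[of _ "Pow S"]) (auto simp: is_chain_def)

lemma finite_antichains: "finite S \<Longrightarrow> finite {A. is_antichain S le A}"
  by (rule finite_subset[of _ "Pow S"]) (auto simp: is_antichain_def)

lemma card_chain_le_height: "finite S \<Longrightarrow> is_chain S le C \<Longrightarrow> card C \<le> height S le"
  unfolding height_def by (rule Max_ge) (auto intro: finite_chains)

lemma card_antichain_le_width: "finite S \<Longrightarrow> is_antichain S le A \<Longrightarrow> card A \<le> width S le"
  unfolding width_def by (rule Max_ge) (auto intro: finite_antichains)

lemma longest_chain_exists: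
  assumes "finite S"
  obtains C where "is_chain S le C" "card C = height S le"
proof -
  have "{} \<in> {C. is_chain S le C}" by (simp add: is_chain_def)
  hence "height S le \<in> card ` {C. is_chain S le C}"
    unfolding height_def using finite_chains[OF assms] by (intro Max_in) auto
  thus ?thesis using that by auto
qed

lemma width_le:
  assumes "finite S" and "\<And>A. is_antichain S le A \<Longrightarrow> card A \<le> n"
  shows "width S le \<le> n"
proof -
  have "{} \<in> {A. is_antichain S le A}" by (simp add: is_antichain_def)
  thus ?thesis unfolding width_def using finite_antichains[OF assms(1)] assms(2)
    by (subst Max_le_iff) auto
qed

lemma width_image_le:
  assumes fin: "finite P"
    and sep: "\<And>a b. \<lbrakk>a \<in> P; b \<in> P; le a b; a \<noteq> b\<rbrakk>
                \<Longrightarrow> f a \<noteq> f b \<and> (le' (f a) (f b) \<or> le' (f b) (f a))"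
  shows "width (f ` P) le' \<le> width P le"
proof (rule width_le)
  show "finite (f ` P)" using fin by simp
next
  fix A assume A: "is_antichain (f ` P) le' A"
  define g where "g = inv_into P f"
  have gP: "g x \<in> P" and fg: "f (g x) = x" if "x \<in> A" for x
    using A that unfolding is_antichain_def g_def by (auto intro: inv_into_into f_inv_into_f)
  have "inj_on g A" by (metis inj_onI fg)
  moreover have "is_antichain P le (g ` A)"
    unfolding is_antichain_def
  proof (intro conjI ballI impI)
    show "g ` A \<subseteq> P" using gP by auto
  next
    fix u v assume "u \<in> g ` A" "v \<in> g ` A" "le u v"
    then obtain x y where "x \<in> A" "y \<in> A" "u = g x" "v = g y" by auto
    then show "u = v"
      using sep[of u v] \<open>le u v\<close> A gP fg unfolding is_antichain_def by metis
  qed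
  ultimately show "card A \<le> width P le"
    using card_antichain_le_width[OF fin] card_image by metis
qed

lemma height_up_set_pos:
  assumes "finite P" and "is_poset P le" and "b \<in> P"
  shows "1 \<le> height (up_set P le b) le"
proof -
  have "is_chain (up_set P le b) le {b}"
    using assms(2,3) unfolding is_chain_def up_set_def is_poset_def by auto
  thus ?thesis using card_chain_le_height[of "up_set P le b" le "{b}"] assms(1)
    by (simp add: up_set_def)
qed

lemma height_up_set_strict_antimono:
  assumes fin: "finite P" and po: "is_poset P le" and a: "a \<in> P" and b: "b \<in> P"
    and ab: "le a b" "a \<noteq> b"
  shows "height (up_set P le b) le < height (up_set P le a) le"
proof -
  have fin_up: "finite (up_set P le x)" for x using fin by (simp add: up_set_def)
  obtain C where C: "is_chain (up_set P le b) le C" "card C = height (up_set P le b) le"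
    using longest_chain_exists[OF fin_up] .
  have "finite C" using C(1) fin_up finite_subset unfolding is_chain_def by blast
  moreover have "a \<notin> C"
    using C(1) po a b ab unfolding is_chain_def up_set_def is_poset_def by blast
  moreover have "is_chain (up_set P le a) le (insert a C)"
    using C(1) po a b ab unfolding is_chain_def up_set_def is_poset_def by blast
  ultimately show ?thesis
    using card_chain_le_height[OF fin_up] C(2) by fastforce
qed

lemma height_down_set_mono:
  assumes fin: "finite P" and po: "is_poset P le" and a: "a \<in> P" and b: "b \<in> P"
    and ab: "le a b"
  shows "height (down_set P le a) le \<le> height (down_set P le b) le"
proof -
  have fin_down: "finite (down_set P le x)" for x using fin by (simp add: down_set_def)
  obtain C where C: "is_chain (down_set P le a) le C" "card C = height (down_set P le a) le"
    using longest_chain_exists[OF fin_down] .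
  have "is_chain (down_set P le b) le C"
    using C(1) po a b ab unfolding is_chain_def down_set_def is_poset_def by blast
  thus ?thesis using card_chain_le_height[OF fin_down] C(2) by metis
qed

lemma interval_rank_strict_antimono:
  assumes "finite P" and "is_poset P le" and "a \<in> P" and "b \<in> P"
    and "le a b" and "a \<noteq> b"
  shows "interval_le (interval_rank P le b) (interval_rank P le a)"
    and "interval_rank P le b \<noteq> interval_rank P le a"
  using height_up_set_strict_antimono[OF assms] height_up_set_pos[OF assms(1,2,4)]
    height_down_set_mono[OF assms(1-5)]
  by (auto simp: interval_le_def interval_rank_def diff_le_mono2)

theorem proposition6:
  fixes P :: "'a set" and le :: "'a \<Rightarrow> 'a \<Rightarrow> bool"
  assumes "finite P"
    and "is_poset P le"
    and "bounded_poset P le"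
    and "card P \<ge> 2"
  shows "width (interval_rank_set P le) interval_le \<le> width P le"
  unfolding interval_rank_set_def
  using width_image_le[OF assms(1)] interval_rank_strict_antimono[OF assms(1,2)] by metis

end
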